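(* Let $\alpha,\beta$ be sets, $z\in\beta$, $\mathit{seq}:\beta\times\alpha\to\beta$ and $\mathit{comb}:\beta\times\beta\to\beta$, and write $x\oplus y$ for $\mathit{comb}(x,y)$. Let $\Gamma=\{\mathrm{foldl}(\mathit{seq},z,L) : L \text{ a finite list over }\alpha\}$. Then calls $\mathrm{aggregate}(z,\mathit{seq},\mathit{comb},\mathit{rdd})$ have deterministic outcomes if and only if both of the following hold: (1) $(\Gamma,\oplus,z)$ is a commutative monoid, i.e. $\oplus$ maps $\Gamma\times\Gamma$ into $\Gamma$, is associative and commutative on $\Gamma$, and $z$ is an identity for $\oplus$ on $\Gamma$; (2) for all finite lists $p_1,p_2$ over $\alpha$, $\mathrm{foldl}(\mathit{seq},z,p_1 \mathbin{+\!\!+} p_2)=\mathrm{foldl}(\mathit{seq},z,p_1)\oplus\mathrm{foldl}(\mathit{seq},z,p_2)$.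
   Context: Lists are finite; $\mathbin{+\!\!+}$ is list concatenation and $\mathrm{concat}$ concatenates a list of lists. For $f:B\times A\to B$, $b\in B$: $\mathrm{foldl}(f,b,[\,])=b$ and $\mathrm{foldl}(f,b,[x_1,\dots,x_n])=f(\cdots f(f(b,x_1),x_2)\cdots,x_n)$. An RDD over $\alpha$ is a list of lists over $\alpha$ (its "partitions"). A partitioning is a function $P$ sending each list $L$ over $\alpha$ to an RDD obtained by splitting $L$ into consecutive (possibly empty) pieces $p_1,\dots,p_n$ with $p_1\mathbin{+\!\!+}\cdots\mathbin{+\!\!+}p_n=L$ and then arbitrarily permuting the list $[p_1,\dots,p_n]$. Define $\mathrm{aggregate}_{\mathrm{det}}(z,\mathit{seq},\mathit{comb},\mathit{rdd})=\mathrm{foldl}(\mathit{comb},z,[\mathrm{foldl}(\mathit{seq},z,q_1),\dots,\mathrm{foldl}(\mathit{seq},z,q_m)])$ for $\mathit{rdd}=[q_1,\dots,q_m]$. Calls $\mathrm{aggregate}(z,\mathit{seq},\mathit{comb},\mathit{rdd})$ are said to have deterministic outcomes if $\mathrm{aggregate}_{\mathrm{det}}(z,\mathit{seq},\mathit{comb},P(L))=\mathrm{foldl}(\mathit{seq},z,L)$ for all lists $L$ over $\alpha$ and all partitionings $P$. *)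

theory Defs
  imports Main "HOL-Library.Multiset"
begin

text \<open>An RDD is a list of partitions. A partitioning sends each list L to a
permutation of some splitting of L into consecutive (possibly empty) pieces.\<close>

definition is_partitioning :: "('a list \<Rightarrow> 'a list list) \<Rightarrow> bool" where
  "is_partitioning P \<longleftrightarrow>
     (\<forall>L. \<exists>ps. concat ps = L \<and> mset (P L) = mset ps)"

definition aggregate_det ::
  "'b \<Rightarrow> ('b \<Rightarrow> 'a \<Rightarrow> 'b) \<Rightarrow> ('b \<Rightarrow> 'b \<Rightarrow> 'b) \<Rightarrow> 'a list list \<Rightarrow> 'b" where
  "aggregate_det z seq comb rdd = foldl comb z (map (foldl seq z) rdd)"

definition deterministic_aggregate ::
  "'b \<Rightarrow> ('b \<Rightarrow> 'a \<Rightarrow> 'b) \<Rightarrow> ('b \<Rightarrow> 'b \<Rightarrow> 'b) \<Rightarrow> bool" where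
  "deterministic_aggregate z seq comb \<longleftrightarrow>
     (\<forall>P. is_partitioning P \<longrightarrow>
        (\<forall>L. aggregate_det z seq comb (P L) = foldl seq z L))"

definition comm_monoid_on :: "'b set \<Rightarrow> ('b \<Rightarrow> 'b \<Rightarrow> 'b) \<Rightarrow> 'b \<Rightarrow> bool" where
  "comm_monoid_on G f e \<longleftrightarrow>
     (\<forall>x\<in>G. \<forall>y\<in>G. f x y \<in> G) \<and>
     (\<forall>x\<in>G. \<forall>y\<in>G. \<forall>w\<in>G. f (f x y) w = f x (f y w)) \<and>
     (\<forall>x\<in>G. \<forall>y\<in>G. f x y = f y x) \<and>
     (\<forall>x\<in>G. f e x = x \<and> f x e = x)"

end

theory Submission
  imports Defs
begin

text \<open>Write \<open>f = foldl seq z\<close>. Determinism forces \<open>f\<close> to be a homomorphism from lists under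
concatenation to \<open>comb\<close>: partition \<open>p\<^sub>1 @ p\<^sub>2\<close> as \<open>[p\<^sub>1, p\<^sub>2]\<close>, and also as \<open>[p\<^sub>2, p\<^sub>1]\<close> for
commutativity. A homomorphic image of the free monoid on which \<open>comb\<close> commutes is a commutative
monoid. Conversely, a homomorphism turns the aggregate of a partition into \<open>f\<close> of its
concatenation, and in a commutative monoid a fold does not see the order of the partitions.\<close>

lemma foldl_permuted_eq_comm_monoid_on:
  assumes "comm_monoid_on G f e" "a \<in> G" "set xs \<subseteq> G" "mset xs = mset ys"
  shows "foldl f a xs = foldl f a ys"
  unfolding foldl_conv_fold
proof (rule fold_permuted_eq[where P = "\<lambda>x. x \<in> G"])
  show "\<And>x b. x \<in> set xs \<Longrightarrow> b \<in> G \<Longrightarrow> f b x \<in> G"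
    using assms(1,3) unfolding comm_monoid_on_def by blast
  show "\<And>x y b. x \<in> set xs \<Longrightarrow> y \<in> set xs \<Longrightarrow> b \<in> G \<Longrightarrow> f (f b y) x = f (f b x) y"
    using assms(1,3) unfolding comm_monoid_on_def by (metis subsetD)
qed (use assms in auto)

lemma foldl_map_hom_concat:
  assumes "\<And>u v. g (u @ v) = f (g u) (g v)"
  shows "foldl f (g a) (map g ps) = g (a @ concat ps)"
  by (induction ps arbitrary: a) (simp_all add: assms[symmetric])

lemma comm_monoid_on_range_hom:
  assumes hom: "\<And>u v. g (u @ v) = f (g u) (g v)"
    and comm: "\<And>u v. f (g u) (g v) = f (g v) (g u)"
  shows "comm_monoid_on (range g) f (g [])"
  unfolding comm_monoid_on_def
proof (intro conjI ballI)
  fix x y w assume "x \<in> range g" "y \<in> range g" "w \<in> range g"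
  then obtain u v t where uvt: "x = g u" "y = g v" "w = g t" by blast
  show "f x y \<in> range g" using uvt by (metis hom rangeI)
  show "f x y = f y x" using comm uvt by simp
  show "f (f x y) w = f x (f y w)" using uvt by (simp add: hom[symmetric])
next
  fix x assume "x \<in> range g"
  then obtain u where "x = g u" by blast
  then show "f (g []) x = x" "f x (g []) = x" by (simp_all add: hom[symmetric])
qed

lemma is_partitioning_permuted_split:
  assumes "mset qs = mset ps"
  shows "is_partitioning (\<lambda>L. if L = concat ps then qs else [L])"
  unfolding is_partitioning_def
proof
  fix L show "\<exists>ps'. concat ps' = L \<and> mset (if L = concat ps then qs else [L]) = mset ps'"
    using assms by (cases "L = concat ps") (rule exI[of _ ps], simp, rule exI[of _ "[L]"], simp)
qed

lemma deterministic_aggregate_permuted_split: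
  assumes "deterministic_aggregate z seq comb" "mset qs = mset ps"
  shows "foldl comb z (map (foldl seq z) qs) = foldl seq z (concat ps)"
proof -
  have "aggregate_det z seq comb ((\<lambda>L. if L = concat ps then qs else [L]) (concat ps))
        = foldl seq z (concat ps)"
    using assms(1) is_partitioning_permuted_split[OF assms(2)]
    unfolding deterministic_aggregate_def by blast
  then show ?thesis by (simp add: aggregate_det_def)
qed

lemma deterministic_aggregate_hom:
  assumes "deterministic_aggregate z seq comb"
  shows "foldl seq z (p1 @ p2) = comb (foldl seq z p1) (foldl seq z p2)"
    and "comb (foldl seq z p1) (foldl seq z p2) = comb (foldl seq z p2) (foldl seq z p1)"
proof -
  let ?f = "foldl seq z"
  have left_id: "comb z (?f L) = ?f L" for L
    using deterministic_aggregate_permuted_split[OF assms, of "[L]" "[L]"] by simp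
  show hom: "?f (p1 @ p2) = comb (?f p1) (?f p2)"
    using deterministic_aggregate_permuted_split[OF assms, of "[p1, p2]" "[p1, p2]"]
    by (simp add: left_id del: foldl_append)
  have "?f (p1 @ p2) = comb (?f p2) (?f p1)"
    using deterministic_aggregate_permuted_split[OF assms, of "[p2, p1]" "[p1, p2]"]
    by (simp add: left_id add_mset_commute del: foldl_append)
  then show "comb (?f p1) (?f p2) = comb (?f p2) (?f p1)"
    using hom by simp
qed

lemma deterministic_aggregate_if_comm_monoid_hom:
  fixes seq :: "'b \<Rightarrow> 'a \<Rightarrow> 'b"
  assumes monoid: "comm_monoid_on (range (foldl seq z)) comb z"
    and hom: "\<And>u v. foldl seq z (u @ v) = comb (foldl seq z u) (foldl seq z v)"
  shows "deterministic_aggregate z seq comb"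
  unfolding deterministic_aggregate_def aggregate_det_def
proof (intro allI impI)
  let ?f = "foldl seq z"
  fix P :: "'a list \<Rightarrow> 'a list list" and L
  assume "is_partitioning P"
  then obtain ps where ps: "concat ps = L" "mset (P L) = mset ps"
    unfolding is_partitioning_def by blast
  have "foldl comb z (map ?f (P L)) = foldl comb z (map ?f ps)"
    using foldl_permuted_eq_comm_monoid_on[OF monoid _ _, of z "map ?f (P L)" "map ?f ps"]
      rangeI[of ?f "[]"] ps(2)
    by (simp add: mset_map image_subset_iff)
  also have "\<dots> = ?f L"
    using foldl_map_hom_concat[of ?f comb "[]" ps, OF hom] ps(1) by simp
  finally show "foldl comb z (map ?f (P L)) = ?f L" .
qed

theorem lemma1:
  fixes z :: 'b and seq :: "'b \<Rightarrow> 'a \<Rightarrow> 'b" and comb :: "'b \<Rightarrow> 'b \<Rightarrow> 'b"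
  shows "deterministic_aggregate z seq comb \<longleftrightarrow>
           (comm_monoid_on {foldl seq z L | L. True} comb z \<and>
            (\<forall>p1 p2. foldl seq z (p1 @ p2) = comb (foldl seq z p1) (foldl seq z p2)))"
proof -
  let ?f = "foldl seq z"
  have image: "{?f L | L. True} = range ?f" by blast
  show ?thesis
  proof
    assume D: "deterministic_aggregate z seq comb"
    have hom: "\<And>u v. ?f (u @ v) = comb (?f u) (?f v)"
      and comm: "\<And>u v. comb (?f u) (?f v) = comb (?f v) (?f u)"
      using deterministic_aggregate_hom[OF D] by blast+
    have "comm_monoid_on (range ?f) comb z"
      using comm_monoid_on_range_hom[of ?f comb, OF hom comm] by simp
    with hom show "comm_monoid_on {?f L | L. True} comb z \<and>
        (\<forall>p1 p2. ?f (p1 @ p2) = comb (?f p1) (?f p2))"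
      unfolding image by blast
  next
    assume "comm_monoid_on {?f L | L. True} comb z \<and>
      (\<forall>p1 p2. ?f (p1 @ p2) = comb (?f p1) (?f p2))"
    then show "deterministic_aggregate z seq comb"
      unfolding image by (blast intro: deterministic_aggregate_if_comm_monoid_hom)
  qed
qed

end
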